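(* Let $\Delta$ be a finite set of defaults such that $\Delta^\rightarrow$ is consistent, and suppose $\Delta$ has Z-partition $(\Delta_0,\ldots,\Delta_n)$. Then for all $\theta,\phi\in L$: $\theta\mid\!\sim^\Delta_{lex}\phi$ if and only if $\phi\in Bel\big((\cdots((\preceq_\emptyset*\preceq_{\Delta^\rightarrow_0})*\preceq_{\Delta^\rightarrow_1})*\cdots*\preceq_{\Delta^\rightarrow_n})*\preceq_{\{\theta\}}\big)$.
   Context: $L$ is a propositional language built from a finite set of propositional variables with the connectives $\neg,\wedge,\vee,\rightarrow,\top,\bot$; $W$ is the finite set of propositional worlds. For $\theta\in L$, $S_\theta=\{w\in W\mid w\models\theta\}$; $E\models\phi$ means $\bigcap_{\theta\in E}S_\theta\subseteq S_\phi$; $\models\phi$ means $\emptyset\models\phi$; $E$ is consistent iff $E\not\models\bot$. Defaults: expressions $\lambda\Rightarrow\chi$ with $\lambda,\chi\in L$; for a set $\Gamma$ of defaults $\Gamma^\rightarrow=\{\lambda\rightarrow\chi\mid\lambda\Rightarrow\chi\in\Gamma\}$. $\lambda\Rightarrow\chi$ is tolerated by $\Gamma$ iff $\{\lambda\wedge\chi\}\cup\Gamma^\rightarrow$ is consistent. Z-partition of $\Delta$: $\Delta_0$ is the set of defaults of $\Delta$ tolerated by $\Delta$; for $i\ge1$, $\Delta_i$ is the set of defaults of $\Delta\setminus(\Delta_0\cup\cdots\cup\Delta_{i-1})$ tolerated by $\Delta\setminus(\Delta_0\cup\cdots\cup\Delta_{i-1})$; stop at the first $n$ with $\Delta_0\cup\cdots\cup\Delta_n=\Delta$.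 Lexicographic closure: for $A,B\subseteq\Delta$, with $A_i=A\cap\Delta_i$, $B_i=B\cap\Delta_i$, $A\ll_{lex}B$ iff there is $i$ with $|A_i|<|B_i|$ and $|A_j|=|B_j|$ for all $j>i$. $\theta\mid\!\sim^\Delta_{lex}\phi$ iff for every $\Gamma\subseteq\Delta$ such that $\Gamma^\rightarrow\cup\{\theta\}$ is consistent and $\Gamma$ is $\ll_{lex}$-maximal among such subsets, $\Gamma^\rightarrow\cup\{\theta\}\models\phi$. E-relation: a relation $\preceq\subseteq L\times L$ such that for all $\theta,\phi,\psi$: (E1) transitivity; (E2) $\theta\models\phi$ implies $\theta\preceq\phi$; (E3) $\theta\preceq\theta\wedge\phi$ or $\phi\preceq\theta\wedge\phi$; (E4) if $\bot\prec\psi$ for some $\psi$, then $\theta\preceq\phi$ for all $\theta$ implies $\models\phi$; $\prec$ is the strict part. $Bel(\preceq)=\{\theta\mid\bot\prec\theta\}$ if $\bot\prec\theta$ for some $\theta$, else $Bel(\preceq)=L$. Sequences: finite sequences $\vec{\mathcal U}=(\mathcal U_0,\ldots,\mathcal U_k)$ of mutually disjoint subsets of $W$ (components may be empty, possibly repeatedly). $\mathrm{rank}^{\vec{\mathcal U}}(\theta)$ is the least $i$ with $\mathcal U_i\cap S_\theta\neq\emptyset$, $\infty$ if none. $\theta\mid\!\sim_{\vec{\mathcal U}}\phi$ iff $\mathrm{rank}^{\vec{\mathcal U}}(\theta)<\mathrm{rank}^{\vec{\mathcal U}}(\theta\wedge\neg\phi)$ or $\mathrm{rank}^{\vec{\mathcal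 U}}(\theta)=\infty$. $\vec{\mathcal U}$ is full iff $\bigcup_i\mathcal U_i=W$, empty iff $\bigcup_i\mathcal U_i=\emptyset$; $\Upsilon$ is the set of full or empty sequences. For $\vec{\mathcal U}\in\Upsilon$, $\theta\preceq_{\vec{\mathcal U}}\phi$ iff (not $\neg\theta\vee\neg\phi\mid\!\sim_{\vec{\mathcal U}}\theta$) or $\neg\phi\mid\!\sim_{\vec{\mathcal U}}\bot$. Sequence revision: if $\vec{\mathcal U}$ is full, $\vec{\mathcal U}*\vec{\mathcal V}=(\mathcal U_0\cap\mathcal V_0,\ldots,\mathcal U_k\cap\mathcal V_0,\ \ldots,\ \mathcal U_0\cap\mathcal V_m,\ldots,\mathcal U_k\cap\mathcal V_m)$ for $\vec{\mathcal V}=(\mathcal V_0,\ldots,\mathcal V_m)$; otherwise $\vec{\mathcal U}*\vec{\mathcal V}=\vec{\mathcal V}$. Revision of E-relations: every E-relation equals $\preceq_{\vec{\mathcal U}}$ for some $\vec{\mathcal U}\in\Upsilon$, and $\preceq_K*\preceq_E:=\preceq_{\vec{\mathcal U}*\vec{\mathcal V}}$ for any $\vec{\mathcal U},\vec{\mathcal V}\in\Upsilon$ with $\preceq_K=\preceq_{\vec{\mathcal U}}$, $\preceq_E=\preceq_{\vec{\mathcal V}}$ (independent of the choice). Relation generated by a finite set $E\subseteq L$: $\theta\prec_E\phi$ iff $E\not\models\bot$, $\not\models\theta$, and for every $E'\subseteq E$ with $E'\cup\{\neg\phi\}$ consistent there is $E''\subseteq E$ with $|E'|<|E''|$ and $E''\cup\{\neg\theta\}$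 consistent; $\theta\preceq_E\phi$ iff not $\phi\prec_E\theta$. ($\preceq_E$ is an E-relation.) *)

theory Defs
  imports Main "HOL-Library.Extended_Nat"
begin

datatype 'v form =
    Var 'v | Neg "'v form" | And "'v form" "'v form" | Or "'v form" "'v form"
  | Imp "'v form" "'v form" | Top | Bot

type_synonym 'v world = "'v \<Rightarrow> bool"

fun sat :: "'v world \<Rightarrow> 'v form \<Rightarrow> bool" where
  "sat w (Var p) = w p"
| "sat w (Neg a) = (\<not> sat w a)"
| "sat w (And a b) = (sat w a \<and> sat w b)"
| "sat w (Or a b) = (sat w a \<or> sat w b)"
| "sat w (Imp a b) = (sat w a \<longrightarrow> sat w b)"
| "sat w Top = True"
| "sat w Bot = False"

text \<open>The set W of worlds is UNIV :: 'v world set (finite when 'v is finite).\<close>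

definition models :: "'v form \<Rightarrow> 'v world set" where
  "models \<theta> = {w. sat w \<theta>}"

definition entails :: "'v form set \<Rightarrow> 'v form \<Rightarrow> bool" where
  "entails E \<phi> \<longleftrightarrow> (\<Inter>\<theta>\<in>E. models \<theta>) \<subseteq> models \<phi>"

definition valid :: "'v form \<Rightarrow> bool" where
  "valid \<phi> \<longleftrightarrow> entails {} \<phi>"

definition consistent :: "'v form set \<Rightarrow> bool" where
  "consistent E \<longleftrightarrow> \<not> entails E Bot"

type_synonym 'v default = "'v form \<times> 'v form"

definition mat :: "'v default set \<Rightarrow> 'v form set" where
  "mat \<Gamma> = {Imp l c | l c. (l, c) \<in> \<Gamma>}"

definition tolerated :: "'v default set \<Rightarrow> 'v default \<Rightarrow> bool" where
  "tolerated \<Gamma> d \<longleftrightarrow> consistent ({And (fst d) (snd d)} \<union> mat \<Gamma>)"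

text \<open>zrest Delta i = Delta minus (Delta_0 union ... union Delta_(i-1)).\<close>
primrec zrest :: "'v default set \<Rightarrow> nat \<Rightarrow> 'v default set" where
  "zrest \<Delta> 0 = \<Delta>"
| "zrest \<Delta> (Suc i) = zrest \<Delta> i - {d \<in> zrest \<Delta> i. tolerated (zrest \<Delta> i) d}"

definition zlayer :: "'v default set \<Rightarrow> nat \<Rightarrow> 'v default set" where
  "zlayer \<Delta> i = {d \<in> zrest \<Delta> i. tolerated (zrest \<Delta> i) d}"

definition has_zpartition :: "'v default set \<Rightarrow> nat \<Rightarrow> bool" where
  "has_zpartition \<Delta> n \<longleftrightarrow>
     (\<Union>i\<le>n. zlayer \<Delta> i) = \<Delta> \<and> (\<forall>m<n. (\<Union>i\<le>m. zlayer \<Delta> i) \<noteq> \<Delta>)"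

definition lex_less :: "'v default set \<Rightarrow> 'v default set \<Rightarrow> 'v default set \<Rightarrow> bool" where
  "lex_less \<Delta> A B \<longleftrightarrow>
     (\<exists>i. card (A \<inter> zlayer \<Delta> i) < card (B \<inter> zlayer \<Delta> i) \<and>
          (\<forall>j>i. card (A \<inter> zlayer \<Delta> j) = card (B \<inter> zlayer \<Delta> j)))"

definition lex_entails :: "'v default set \<Rightarrow> 'v form \<Rightarrow> 'v form \<Rightarrow> bool" where
  "lex_entails \<Delta> \<theta> \<phi> \<longleftrightarrow>
     (\<forall>\<Gamma>. \<Gamma> \<subseteq> \<Delta> \<and> consistent (mat \<Gamma> \<union> {\<theta>}) \<and>
          (\<forall>\<Gamma>'. \<Gamma>' \<subseteq> \<Delta> \<and> consistent (mat \<Gamma>' \<union> {\<theta>}) \<longrightarrow> \<not> lex_less \<Delta> \<Gamma> \<Gamma>')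
       \<longrightarrow> entails (mat \<Gamma> \<union> {\<theta>}) \<phi>)"

type_synonym 'v rel = "'v form \<Rightarrow> 'v form \<Rightarrow> bool"

definition strict :: "'v rel \<Rightarrow> 'v form \<Rightarrow> 'v form \<Rightarrow> bool" where
  "strict R a b \<longleftrightarrow> R a b \<and> \<not> R b a"

definition E_relation :: "'v rel \<Rightarrow> bool" where
  "E_relation R \<longleftrightarrow>
     (\<forall>a b c. R a b \<longrightarrow> R b c \<longrightarrow> R a c) \<and>
     (\<forall>a b. entails {a} b \<longrightarrow> R a b) \<and>
     (\<forall>a b. R a (And a b) \<or> R b (And a b)) \<and>
     ((\<exists>c. strict R Bot c) \<longrightarrow> (\<forall>b. (\<forall>a. R a b) \<longrightarrow> valid b))"

definition Bel :: "'v rel \<Rightarrow> 'v form set" where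
  "Bel R = (if \<exists>c. strict R Bot c then {c. strict R Bot c} else UNIV)"

type_synonym 'v seq = "'v world set list"

definition wf_seq :: "'v seq \<Rightarrow> bool" where
  "wf_seq U \<longleftrightarrow> U \<noteq> [] \<and>
     (\<forall>i<length U. \<forall>j<length U. i \<noteq> j \<longrightarrow> U ! i \<inter> U ! j = {})"

definition rank :: "'v seq \<Rightarrow> 'v form \<Rightarrow> enat" where
  "rank U \<theta> = (if \<exists>i<length U. U ! i \<inter> models \<theta> \<noteq> {}
                then enat (LEAST i. i < length U \<and> U ! i \<inter> models \<theta> \<noteq> {})
                else \<infinity>)"

definition seq_inf :: "'v seq \<Rightarrow> 'v form \<Rightarrow> 'v form \<Rightarrow> bool" where
  "seq_inf U \<theta> \<phi> \<longleftrightarrow> rank U \<theta> < rank U (And \<theta> (Neg \<phi>)) \<or> rank U \<theta> = \<infinity>"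

definition full :: "'v seq \<Rightarrow> bool" where
  "full U \<longleftrightarrow> (\<Union>i<length U. U ! i) = UNIV"

definition empty_seq :: "'v seq \<Rightarrow> bool" where
  "empty_seq U \<longleftrightarrow> (\<Union>i<length U. U ! i) = {}"

definition Upsilon :: "'v seq set" where
  "Upsilon = {U. wf_seq U \<and> (full U \<or> empty_seq U)}"

definition seq_rel :: "'v seq \<Rightarrow> 'v rel" where
  "seq_rel U \<theta> \<phi> \<longleftrightarrow> \<not> seq_inf U (Or (Neg \<theta>) (Neg \<phi>)) \<theta> \<or> seq_inf U (Neg \<phi>) Bot"

definition seq_rev :: "'v seq \<Rightarrow> 'v seq \<Rightarrow> 'v seq" where
  "seq_rev U V = (if full U then concat (map (\<lambda>v. map (\<lambda>u. u \<inter> v) U) V) else V)"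

definition erev :: "'v rel \<Rightarrow> 'v rel \<Rightarrow> 'v rel" where
  "erev K E = (SOME R. \<exists>U V. U \<in> Upsilon \<and> V \<in> Upsilon \<and>
                 K = seq_rel U \<and> E = seq_rel V \<and> R = seq_rel (seq_rev U V))"

definition gen_less :: "'v form set \<Rightarrow> 'v form \<Rightarrow> 'v form \<Rightarrow> bool" where
  "gen_less E \<theta> \<phi> \<longleftrightarrow> consistent E \<and> \<not> valid \<theta> \<and>
     (\<forall>E'. E' \<subseteq> E \<and> consistent (E' \<union> {Neg \<phi>}) \<longrightarrow>
        (\<exists>E''. E'' \<subseteq> E \<and> card E' < card E'' \<and> consistent (E'' \<union> {Neg \<theta>})))"

definition gen_le :: "'v form set \<Rightarrow> 'v rel" where
  "gen_le E \<theta> \<phi> \<longleftrightarrow> \<not> gen_less E \<phi> \<theta>"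

text \<open>revchain Delta (i+1) = ((...(gen_le {} * gen_le Delta_0^->) * ...) * gen_le Delta_i^->).\<close>
primrec revchain :: "'v default set \<Rightarrow> nat \<Rightarrow> 'v rel" where
  "revchain \<Delta> 0 = gen_le {}"
| "revchain \<Delta> (Suc i) = erev (revchain \<Delta> i) (gen_le (mat (zlayer \<Delta> i)))"

end

theory Submission
  imports Defs
begin

text \<open>
  All E-relations involved are represented by full sequences of disjoint sets of worlds,
  i.e. by a ranking of the worlds.  The relation generated by a consistent finite set \<open>E\<close>
  ranks a world by the number of formulas of \<open>E\<close> it violates, and revising a full ranking
  by another full ranking orders worlds lexicographically, the new ranking being the most
  significant digit.  So after revising by \<open>\<Delta>\<^sub>0\<^sup>\<rightarrow>, \<dots>, \<Delta>\<^sub>n\<^sup>\<rightarrow>\<close> the worlds are ranked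
  lexicographically by their violation counts in \<open>\<Delta>\<^sub>n, \<dots>, \<Delta>\<^sub>0\<close>, which is the order \<open>\<ll>\<^sub>l\<^sub>e\<^sub>x\<close>
  on the sets of defaults they satisfy.  A final revision by \<open>\<theta>\<close> makes the best
  \<open>\<theta>\<close>-worlds minimal, and these are exactly the models of the \<open>\<ll>\<^sub>l\<^sub>e\<^sub>x\<close>-maximal subsets
  of \<open>\<Delta>\<close> consistent with \<open>\<theta>\<close>.
\<close>

lemma consistent_iff: "consistent S \<longleftrightarrow> (\<exists>w. \<forall>f\<in>S. sat w f)"
  unfolding consistent_def entails_def models_def by auto

lemma entails_iff: "entails S \<phi> \<longleftrightarrow> (\<forall>w. (\<forall>f\<in>S. sat w f) \<longrightarrow> sat w \<phi>)"
  unfolding entails_def models_def by auto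

lemma valid_iff: "valid \<phi> \<longleftrightarrow> (\<forall>w. sat w \<phi>)"
  unfolding valid_def entails_def models_def by auto

lemma consistent_subset: "S \<subseteq> T \<Longrightarrow> consistent T \<Longrightarrow> consistent S"
  unfolding consistent_iff by blast

lemma ex_characteristic_form:
  fixes w :: "('v::finite) world"
  shows "\<exists>c. \<forall>x. sat x c \<longleftrightarrow> x = w"
proof -
  obtain ps :: "'v list" where ps: "set ps = UNIV"
    using finite_list[OF finite_UNIV] by blast
  let ?c = "\<lambda>ps. foldr (\<lambda>p c. And (if w p then Var p else Neg (Var p)) c) ps Top"
  have "sat x (?c qs) \<longleftrightarrow> (\<forall>p\<in>set qs. x p = w p)" for x qs
    by (induction qs) auto
  then show ?thesis
    using ps by (intro exI[of _ "?c ps"]) (auto simp: fun_eq_iff)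
qed

section \<open>Full sequences as rankings of worlds\<close>

definition level :: "'v seq \<Rightarrow> 'v world \<Rightarrow> nat" where
  "level U w = (LEAST i. i < length U \<and> w \<in> U ! i)"

lemma level_eqI:
  assumes "wf_seq U" "i < length U" "w \<in> U ! i"
  shows "level U w = i"
  unfolding level_def
proof (rule Least_equality)
  show "i < length U \<and> w \<in> U ! i" using assms by auto
  fix j assume "j < length U \<and> w \<in> U ! j"
  then have "j = i" using assms unfolding wf_seq_def by blast
  then show "i \<le> j" by simp
qed

lemma
  assumes "wf_seq U" "full U"
  shows level_less_length: "level U w < length U"
    and level_mem: "w \<in> U ! level U w"
proof -
  from assms(2) obtain i where "i < length U" "w \<in> U ! i"
    unfolding full_def by blast
  with level_eqI[OF assms(1) this] show "level U w < length U" "w \<in> U ! level U w"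
    by simp_all
qed

lemma rank_le_enat_iff:
  assumes "wf_seq U" "full U"
  shows "rank U \<psi> \<le> enat k \<longleftrightarrow> (\<exists>w. sat w \<psi> \<and> level U w \<le> k)"
proof (cases "\<exists>i<length U. U ! i \<inter> models \<psi> \<noteq> {}")
  case True
  let ?L = "LEAST i. i < length U \<and> U ! i \<inter> models \<psi> \<noteq> {}"
  have rank: "rank U \<psi> = enat ?L"
    using True unfolding rank_def by simp
  have L: "?L < length U" "U ! ?L \<inter> models \<psi> \<noteq> {}"
    using LeastI_ex[of "\<lambda>i. i < length U \<and> U ! i \<inter> models \<psi> \<noteq> {}"] True by blast+
  show ?thesis
  proof
    assume "rank U \<psi> \<le> enat k"
    moreover obtain w where "w \<in> U ! ?L" "sat w \<psi>"
      using L(2) unfolding models_def by auto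
    moreover have "level U w = ?L"
      using level_eqI[OF assms(1) L(1)] \<open>w \<in> U ! ?L\<close> .
    ultimately show "\<exists>w. sat w \<psi> \<and> level U w \<le> k"
      using rank by auto
  next
    assume "\<exists>w. sat w \<psi> \<and> level U w \<le> k"
    then obtain w where w: "sat w \<psi>" "level U w \<le> k" by blast
    have "level U w < length U \<and> U ! level U w \<inter> models \<psi> \<noteq> {}"
      using level_less_length[OF assms] level_mem[OF assms] w(1) unfolding models_def by auto
    then have "?L \<le> level U w" by (rule Least_le)
    then show "rank U \<psi> \<le> enat k" using rank w(2) by simp
  qed
next
  case False
  then have "rank U \<psi> = \<infinity>" unfolding rank_def by simp
  moreover have "\<not> (\<exists>w. sat w \<psi> \<and> level U w \<le> k)"
    using False level_less_length[OF assms] level_mem[OF assms] unfolding models_def by blast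
  ultimately show ?thesis by simp
qed

lemma rank_cong: "(\<And>w. sat w \<psi> \<longleftrightarrow> sat w \<chi>) \<Longrightarrow> rank U \<psi> = rank U \<chi>"
  unfolding rank_def models_def by simp

lemma enat_le_iff_upper_bounds: "(a::enat) \<le> b \<longleftrightarrow> (\<forall>k. b \<le> enat k \<longrightarrow> a \<le> enat k)"
  by (cases b) (auto intro: order_trans)

lemma enat_eqI_upper_bounds: "(\<And>k. (a::enat) \<le> enat k \<longleftrightarrow> b \<le> enat k) \<Longrightarrow> a = b"
  by (meson antisym enat_le_iff_upper_bounds)

lemma rank_Or:
  assumes "wf_seq U" "full U"
  shows "rank U (Or a b) = min (rank U a) (rank U b)"
  by (rule enat_eqI_upper_bounds) (auto simp: rank_le_enat_iff[OF assms] min_le_iff_disj)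

lemma seq_rel_iff_rank_Neg:
  assumes "wf_seq U" "full U"
  shows "seq_rel U \<theta> \<phi> \<longleftrightarrow> rank U (Neg \<theta>) \<le> rank U (Neg \<phi>)"
proof -
  have "rank U (And (Or (Neg \<theta>) (Neg \<phi>)) (Neg \<theta>)) = rank U (Neg \<theta>)"
    and "rank U (And (Neg \<phi>) (Neg Bot)) = rank U (Neg \<phi>)"
    by (rule rank_cong, auto)+
  then show ?thesis
    unfolding seq_rel_def seq_inf_def rank_Or[OF assms]
    by (cases "rank U (Neg \<theta>)"; cases "rank U (Neg \<phi>)") (auto simp: min_def)
qed

lemma seq_rel_full_iff:
  assumes "wf_seq U" "full U"
  shows "seq_rel U \<theta> \<phi> \<longleftrightarrow>
    (\<forall>w. \<not> sat w \<phi> \<longrightarrow> (\<exists>w'. \<not> sat w' \<theta> \<and> level U w' \<le> level U w))"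
  unfolding seq_rel_iff_rank_Neg[OF assms] enat_le_iff_upper_bounds[of "rank U (Neg \<theta>)"]
    rank_le_enat_iff[OF assms]
  by auto (meson order_refl order_trans)+

lemma seq_rel_trivial:
  assumes "\<forall>X\<in>set U. X = {}"
  shows "seq_rel U \<theta> \<phi>"
proof -
  have "rank U (Neg \<phi>) = \<infinity>" using assms unfolding rank_def by auto
  then show ?thesis unfolding seq_rel_def seq_inf_def by simp
qed

lemma Upsilon_cases:
  assumes "U \<in> Upsilon"
  shows "wf_seq U" and "full U \<or> (\<forall>X\<in>set U. X = {})"
  using assms unfolding Upsilon_def empty_seq_def by (auto simp: in_set_conv_nth)

lemma full_iff_not_seq_rel_Top_Bot:
  assumes "U \<in> Upsilon"
  shows "full U \<longleftrightarrow> \<not> seq_rel U Top Bot"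
proof
  assume "full U"
  then show "\<not> seq_rel U Top Bot"
    using seq_rel_full_iff[OF Upsilon_cases(1)[OF assms]] by simp
next
  assume "\<not> seq_rel U Top Bot"
  then show "full U" using Upsilon_cases[OF assms] seq_rel_trivial by blast
qed

text \<open>For full sequences the relation determines the ranking, because every single world
  is described by a formula.\<close>

lemma level_le_iff_of_seq_rel_eq:
  fixes U U' :: "('v::finite) seq"
  assumes "wf_seq U" "full U" "wf_seq U'" "full U'" "seq_rel U = seq_rel U'"
  shows "level U w' \<le> level U w \<longleftrightarrow> level U' w' \<le> level U' w"
proof -
  obtain c where c: "\<forall>x. sat x c \<longleftrightarrow> x = w" using ex_characteristic_form by blast
  obtain c' where c': "\<forall>x. sat x c' \<longleftrightarrow> x = w'" using ex_characteristic_form by blast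
  have "seq_rel U (Neg c') (Neg c) \<longleftrightarrow> level U w' \<le> level U w"
    using seq_rel_full_iff[OF assms(1,2)] c c' by simp
  moreover have "seq_rel U' (Neg c') (Neg c) \<longleftrightarrow> level U' w' \<le> level U' w"
    using seq_rel_full_iff[OF assms(3,4)] c c' by simp
  ultimately show ?thesis using assms(5) by simp
qed

lemma seq_rev_full_eq: "full U \<Longrightarrow> seq_rev U V = map (\<lambda>(v, u). u \<inter> v) (List.product V U)"
  by (simp add: seq_rev_def product_concat_map map_concat comp_def)

lemma seq_rev_trivial: "\<forall>X\<in>set V. X = {} \<Longrightarrow> \<forall>X\<in>set (seq_rev U V). X = {}"
  unfolding seq_rev_def by auto

lemma mixed_radix_le_iff:
  fixes i i' j j' m :: nat
  assumes "i < m" "i' < m"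
  shows "j' * m + i' \<le> j * m + i \<longleftrightarrow> j' < j \<or> (j' = j \<and> i' \<le> i)"
proof -
  have "j' * m + i' < j * m + i" if "j' < j"
  proof -
    have "Suc j' * m \<le> j * m" using that by (intro mult_le_mono1) simp
    then show ?thesis using assms by simp
  qed
  moreover have "j * m + i < j' * m + i'" if "j < j'"
  proof -
    have "Suc j * m \<le> j' * m" using that by (intro mult_le_mono1) simp
    then show ?thesis using assms by simp
  qed
  ultimately show ?thesis by (cases "j' < j"; cases "j < j'") auto
qed

lemma mixed_radix_less_iff:
  fixes i i' j j' m :: nat
  assumes "i < m" "i' < m"
  shows "j * m + i < j' * m + i' \<longleftrightarrow> j < j' \<or> (j = j' \<and> i < i')"
  using mixed_radix_le_iff[OF assms, of j' j] by auto

lemma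
  assumes U: "wf_seq U" "full U" and V: "wf_seq V" "full V"
  shows wf_seq_rev: "wf_seq (seq_rev U V)"
    and full_seq_rev: "full (seq_rev U V)"
    and level_seq_rev: "level (seq_rev U V) w = level V w * length U + level U w"
proof -
  define m where "m = length U"
  let ?W = "seq_rev U V"
  have "0 < m" using U(1) by (simp add: wf_seq_def m_def)
  have len: "length ?W = length V * m"
    using U(2) by (simp add: seq_rev_full_eq m_def)
  have nth: "?W ! k = U ! (k mod m) \<inter> V ! (k div m)" if "k < length ?W" for k
    using U(2) that len by (simp add: seq_rev_full_eq product_nth m_def)
  have digits: "k div m < length V" "k mod m < m" if "k < length ?W" for k
    using that len \<open>0 < m\<close> by (simp_all add: less_mult_imp_div_less)
  show wf: "wf_seq ?W"
    unfolding wf_seq_def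
  proof (intro conjI allI impI)
    show "?W \<noteq> []" using len \<open>0 < m\<close> V(1) by (auto simp: wf_seq_def)
    fix k k' assume k: "k < length ?W" "k' < length ?W" "k \<noteq> k'"
    then have "k mod m \<noteq> k' mod m \<or> k div m \<noteq> k' div m"
      by (metis div_mult_mod_eq)
    then show "?W ! k \<inter> ?W ! k' = {}"
      using U(1) V(1) digits[OF k(1)] digits[OF k(2)] unfolding nth[OF k(1)] nth[OF k(2)]
      unfolding wf_seq_def m_def by blast
  qed
  have pos: "level V x * m + level U x < length ?W \<and> x \<in> ?W ! (level V x * m + level U x)" for x
  proof -
    have "level U x < m" "x \<in> U ! level U x"
      using level_less_length[OF U] level_mem[OF U] unfolding m_def by auto
    moreover have "level V x < length V" "x \<in> V ! level V x"
      using level_less_length[OF V] level_mem[OF V] by auto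
    moreover have "Suc (level V x) * m \<le> length V * m"
      using \<open>level V x < length V\<close> by (intro mult_le_mono1) simp
    ultimately show ?thesis using nth len by simp
  qed
  show "full ?W" unfolding full_def using pos by blast
  show "level ?W w = level V w * length U + level U w"
    using level_eqI[OF wf] pos unfolding m_def by blast
qed

text \<open>Stated with \<open>\<le>\<close> only, so that it transfers along \<open>level_le_iff_of_seq_rel_eq\<close>.\<close>

lemma level_seq_rev_le_iff:
  assumes "wf_seq U" "full U" "wf_seq V" "full V"
  shows "level (seq_rev U V) w' \<le> level (seq_rev U V) w \<longleftrightarrow>
    (level V w' \<le> level V w \<and> \<not> level V w \<le> level V w') \<or>
    (level V w' \<le> level V w \<and> level V w \<le> level V w' \<and> level U w' \<le> level U w)"
  unfolding level_seq_rev[OF assms]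
  by (subst mixed_radix_le_iff) (auto simp: level_less_length[OF assms(1,2)])

lemma seq_rel_seq_rev_cong:
  fixes U U' V V' :: "('v::finite) seq"
  assumes U: "U \<in> Upsilon" "full U" "U' \<in> Upsilon" and V: "V \<in> Upsilon" "V' \<in> Upsilon"
    and eq: "seq_rel U = seq_rel U'" "seq_rel V = seq_rel V'"
  shows "seq_rel (seq_rev U V) = seq_rel (seq_rev U' V')"
proof -
  have "full U'" using U eq(1) full_iff_not_seq_rel_Top_Bot by metis
  note wf = Upsilon_cases(1)[OF U(1)] Upsilon_cases(1)[OF U(3)]
    Upsilon_cases(1)[OF V(1)] Upsilon_cases(1)[OF V(2)]
  consider "full V" "full V'" | "\<forall>X\<in>set V. X = {}" "\<forall>X\<in>set V'. X = {}"
    using V eq(2) Upsilon_cases(2) full_iff_not_seq_rel_Top_Bot by metis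
  then show ?thesis
  proof cases
    case 1
    have "level (seq_rev U V) w' \<le> level (seq_rev U V) w \<longleftrightarrow>
          level (seq_rev U' V') w' \<le> level (seq_rev U' V') w" for w w'
      using level_seq_rev_le_iff[OF wf(1) U(2) wf(3) 1(1)]
        level_seq_rev_le_iff[OF wf(2) \<open>full U'\<close> wf(4) 1(2)]
        level_le_iff_of_seq_rel_eq[OF wf(1) U(2) wf(2) \<open>full U'\<close> eq(1)]
        level_le_iff_of_seq_rel_eq[OF wf(3) 1(1) wf(4) 1(2) eq(2)]
      by simp
    then show ?thesis
      by (intro ext) (simp add: seq_rel_full_iff wf_seq_rev full_seq_rev wf U(2) \<open>full U'\<close> 1)
  next
    case 2
    then show ?thesis by (intro ext) (simp add: seq_rel_trivial seq_rev_trivial)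
  qed
qed

lemma erev_seq_rel:
  fixes U V :: "('v::finite) seq"
  assumes "U \<in> Upsilon" "full U" "V \<in> Upsilon"
  shows "erev (seq_rel U) (seq_rel V) = seq_rel (seq_rev U V)"
proof -
  have unique: "R = seq_rel (seq_rev U V)"
    if "\<exists>U' V'. U' \<in> Upsilon \<and> V' \<in> Upsilon \<and> seq_rel U = seq_rel U' \<and>
            seq_rel V = seq_rel V' \<and> R = seq_rel (seq_rev U' V')" for R
    using that seq_rel_seq_rev_cong[OF assms(1,2) _ assms(3)] by metis
  show ?thesis
    unfolding erev_def
    by (rule someI2[where a = "seq_rel (seq_rev U V)"]) (use assms unique in blast)+
qed

section \<open>The relation generated by a set of formulas\<close>

definition violations :: "'v form set \<Rightarrow> 'v world \<Rightarrow> nat" where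
  "violations E w = card {f\<in>E. \<not> sat w f}"

definition violation_seq :: "'v form set \<Rightarrow> 'v seq" where
  "violation_seq E = map (\<lambda>k. {w. violations E w = k}) [0..<Suc (card E)]"

lemma card_filter_add_card_filter_not:
  assumes "finite A"
  shows "card {x\<in>A. P x} + card {x\<in>A. \<not> P x} = card A"
proof -
  have "card {x\<in>A. P x} + card {x\<in>A. \<not> P x} = card ({x\<in>A. P x} \<union> {x\<in>A. \<not> P x})"
    by (rule card_Un_disjoint[symmetric]) (use assms in auto)
  also have "{x\<in>A. P x} \<union> {x\<in>A. \<not> P x} = A" by auto
  finally show ?thesis .
qed

lemma card_satisfied_add_violations:
  "finite E \<Longrightarrow> card {f\<in>E. sat w f} + violations E w = card E"
  unfolding violations_def by (rule card_filter_add_card_filter_not)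

lemma
  assumes "finite E"
  shows wf_violation_seq: "wf_seq (violation_seq E)"
    and full_violation_seq: "full (violation_seq E)"
    and level_violation_seq: "level (violation_seq E) w = violations E w"
proof -
  have len: "length (violation_seq E) = Suc (card E)"
    unfolding violation_seq_def by simp
  have nth: "k < Suc (card E) \<Longrightarrow> violation_seq E ! k = {w. violations E w = k}" for k
    unfolding violation_seq_def by (simp del: upt_Suc)
  show wf: "wf_seq (violation_seq E)"
    unfolding wf_seq_def using nth len by auto
  have pos: "violations E x < length (violation_seq E) \<and> x \<in> violation_seq E ! violations E x" for x
    using card_satisfied_add_violations[OF assms, of x] nth len by auto
  show "full (violation_seq E)" unfolding full_def using pos by blast
  show "level (violation_seq E) w = violations E w"
    using level_eqI[OF wf] pos by blast
qed

lemma ex_consistent_subset_card_iff: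
  assumes "finite E"
  shows "(\<exists>E'. E' \<subseteq> E \<and> consistent (E' \<union> {\<psi>}) \<and> k \<le> card E') \<longleftrightarrow>
         (\<exists>w. sat w \<psi> \<and> violations E w + k \<le> card E)"
proof
  assume "\<exists>E'. E' \<subseteq> E \<and> consistent (E' \<union> {\<psi>}) \<and> k \<le> card E'"
  then obtain E' w where E': "E' \<subseteq> E" "k \<le> card E'" "\<forall>f\<in>E'. sat w f" "sat w \<psi>"
    unfolding consistent_iff by auto
  then have "card E' \<le> card {f\<in>E. sat w f}"
    using assms by (intro card_mono) auto
  then show "\<exists>w. sat w \<psi> \<and> violations E w + k \<le> card E"
    using E' card_satisfied_add_violations[OF assms, of w] by (intro exI[of _ w]) simp
next
  assume "\<exists>w. sat w \<psi> \<and> violations E w + k \<le> card E"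
  then obtain w where "sat w \<psi>" "violations E w + k \<le> card E" by blast
  then show "\<exists>E'. E' \<subseteq> E \<and> consistent (E' \<union> {\<psi>}) \<and> k \<le> card E'"
    using card_satisfied_add_violations[OF assms, of w]
    by (intro exI[of _ "{f\<in>E. sat w f}"]) (auto simp: consistent_iff)
qed

lemma gen_less_iff_violations:
  assumes "finite E"
  shows "gen_less E \<theta> \<phi> \<longleftrightarrow> consistent E \<and> \<not> valid \<theta> \<and>
    (\<forall>w. \<not> sat w \<phi> \<longrightarrow> (\<exists>u. \<not> sat u \<theta> \<and> violations E u < violations E w))"
proof -
  have "(\<forall>E'. E' \<subseteq> E \<and> consistent (E' \<union> {Neg \<phi>}) \<longrightarrow>
          (\<exists>E''. E'' \<subseteq> E \<and> card E' < card E'' \<and> consistent (E'' \<union> {Neg \<theta>}))) \<longleftrightarrow>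
        (\<forall>w. \<not> sat w \<phi> \<longrightarrow> (\<exists>u. \<not> sat u \<theta> \<and> violations E u < violations E w))"
    (is "?sets \<longleftrightarrow> ?worlds")
  proof
    assume sets: ?sets
    show ?worlds
    proof (intro allI impI)
      fix w assume "\<not> sat w \<phi>"
      let ?E' = "{f\<in>E. sat w f}"
      have "?E' \<subseteq> E" by blast
      moreover have "consistent (?E' \<union> {Neg \<phi>})"
        using \<open>\<not> sat w \<phi>\<close> unfolding consistent_iff by auto
      ultimately have "\<exists>E''. E'' \<subseteq> E \<and> card ?E' < card E'' \<and> consistent (E'' \<union> {Neg \<theta>})"
        by (rule sets[rule_format, OF conjI])
      then obtain E'' where E'': "E'' \<subseteq> E" "card ?E' < card E''" "consistent (E'' \<union> {Neg \<theta>})"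
        by blast
      then have "\<exists>u. sat u (Neg \<theta>) \<and> violations E u + card E'' \<le> card E"
        using ex_consistent_subset_card_iff[OF assms, of "Neg \<theta>" "card E''"] by blast
      then obtain u where "\<not> sat u \<theta>" "violations E u + card E'' \<le> card E"
        by auto
      moreover have "card ?E' + violations E w = card E"
        by (rule card_satisfied_add_violations[OF assms])
      ultimately show "\<exists>u. \<not> sat u \<theta> \<and> violations E u < violations E w"
        using E''(2) by (intro exI[of _ u]) simp
    qed
  next
    assume worlds: ?worlds
    show ?sets
    proof (intro allI impI)
      fix E' assume "E' \<subseteq> E \<and> consistent (E' \<union> {Neg \<phi>})"
      then have "\<exists>w. sat w (Neg \<phi>) \<and> violations E w + card E' \<le> card E"
        using ex_consistent_subset_card_iff[OF assms, of "Neg \<phi>" "card E'"] by blast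
      then obtain w where "\<not> sat w \<phi>" "violations E w + card E' \<le> card E"
        by auto
      moreover obtain u where "\<not> sat u \<theta>" "violations E u < violations E w"
        using worlds calculation(1) by blast
      ultimately have "\<exists>u. sat u (Neg \<theta>) \<and> violations E u + Suc (card E') \<le> card E"
        by (intro exI[of _ u]) simp
      then obtain E'' where "E'' \<subseteq> E" "consistent (E'' \<union> {Neg \<theta>})" "Suc (card E') \<le> card E''"
        using ex_consistent_subset_card_iff[OF assms, of "Neg \<theta>" "Suc (card E')"] by blast
      then show "\<exists>E''. E'' \<subseteq> E \<and> card E' < card E'' \<and> consistent (E'' \<union> {Neg \<theta>})"
        by (intro exI[of _ E'']) simp
    qed
  qed
  then show ?thesis unfolding gen_less_def by blast
qed

lemma all_ex_le_iff_not_all_ex_less: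
  fixes f :: "'a \<Rightarrow> nat"
  shows "(\<forall>w. P w \<longrightarrow> (\<exists>u. Q u \<and> f u \<le> f w)) \<longleftrightarrow>
         \<not> ((\<exists>w. P w) \<and> (\<forall>u. Q u \<longrightarrow> (\<exists>w. P w \<and> f w < f u)))"
proof
  assume le: "\<forall>w. P w \<longrightarrow> (\<exists>u. Q u \<and> f u \<le> f w)"
  show "\<not> ((\<exists>w. P w) \<and> (\<forall>u. Q u \<longrightarrow> (\<exists>w. P w \<and> f w < f u)))"
  proof
    assume "(\<exists>w. P w) \<and> (\<forall>u. Q u \<longrightarrow> (\<exists>w. P w \<and> f w < f u))"
    moreover obtain w where "P w" "\<forall>w'. P w' \<longrightarrow> f w \<le> f w'"
      using calculation ex_has_least_nat[of P _ f] by blast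
    ultimately show False using le by (meson leD order_less_le_trans)
  qed
qed (meson not_le)

lemma gen_le_eq_seq_rel:
  assumes "finite E" "consistent E"
  shows "gen_le E = seq_rel (violation_seq E)"
proof (intro ext)
  fix \<theta> \<phi>
  show "gen_le E \<theta> \<phi> = seq_rel (violation_seq E) \<theta> \<phi>"
    unfolding gen_le_def gen_less_iff_violations[OF assms(1)]
      seq_rel_full_iff[OF wf_violation_seq[OF assms(1)] full_violation_seq[OF assms(1)]]
      level_violation_seq[OF assms(1)] all_ex_le_iff_not_all_ex_less valid_iff
    using assms(2) by simp
qed

lemma gen_le_inconsistent: "\<not> consistent E \<Longrightarrow> gen_le E \<theta> \<phi>"
  unfolding gen_le_def gen_less_def by simp

lemma mat_eq_image: "mat \<Gamma> = (\<lambda>d. Imp (fst d) (snd d)) ` \<Gamma>"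
  unfolding mat_def by force

lemma zrest_subset: "zrest \<Delta> i \<subseteq> \<Delta>"
  by (induction i) auto

lemma zlayer_subset: "zlayer \<Delta> i \<subseteq> \<Delta>"
  using zrest_subset unfolding zlayer_def by blast

lemma zrest_Suc_eq: "zrest \<Delta> (Suc i) = \<Delta> - (\<Union>k\<le>i. zlayer \<Delta> k)"
  by (induction i) (auto simp: zlayer_def atMost_Suc)

lemma zlayer_empty_beyond:
  assumes "has_zpartition \<Delta> n" "n < j"
  shows "zlayer \<Delta> j = {}"
proof -
  have antimono: "zrest \<Delta> (k + m) \<subseteq> zrest \<Delta> k" for k m
    by (induction m) auto
  have "zrest \<Delta> j \<subseteq> zrest \<Delta> (Suc n)"
    using antimono[of "Suc n" "j - Suc n"] assms(2) by simp
  also have "zrest \<Delta> (Suc n) = {}"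
    using assms(1) unfolding zrest_Suc_eq has_zpartition_def by simp
  finally show ?thesis unfolding zlayer_def by blast
qed

lemma finite_mat_zlayer: "finite \<Delta> \<Longrightarrow> finite (mat (zlayer \<Delta> i))"
  unfolding mat_eq_image using zlayer_subset by (metis finite_imageI finite_subset)

primrec revchain_seq :: "'v default set \<Rightarrow> nat \<Rightarrow> 'v seq" where
  "revchain_seq \<Delta> 0 = violation_seq {}"
| "revchain_seq \<Delta> (Suc i) = seq_rev (revchain_seq \<Delta> i) (violation_seq (mat (zlayer \<Delta> i)))"

lemma
  assumes "finite \<Delta>"
  shows wf_revchain_seq: "wf_seq (revchain_seq \<Delta> i)"
    and full_revchain_seq: "full (revchain_seq \<Delta> i)"
  by (induction i) (simp_all add: wf_violation_seq full_violation_seq wf_seq_rev full_seq_rev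
      finite_mat_zlayer[OF assms])

lemma revchain_eq_seq_rel:
  fixes \<Delta> :: "('v::finite) default set"
  assumes "finite \<Delta>" "consistent (mat \<Delta>)"
  shows "revchain \<Delta> i = seq_rel (revchain_seq \<Delta> i)"
proof (induction i)
  case 0
  have "consistent ({} :: 'v form set)" by (simp add: consistent_iff)
  then show ?case by (simp add: gen_le_eq_seq_rel)
next
  case (Suc i)
  let ?E = "mat (zlayer \<Delta> i)"
  have "finite ?E" by (rule finite_mat_zlayer[OF assms(1)])
  have "?E \<subseteq> mat \<Delta>"
    unfolding mat_eq_image by (rule image_mono[OF zlayer_subset])
  then have "consistent ?E" using assms(2) by (rule consistent_subset)
  have "revchain_seq \<Delta> i \<in> Upsilon" "violation_seq ?E \<in> Upsilon"
    unfolding Upsilon_def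
    using wf_revchain_seq[OF assms(1)] full_revchain_seq[OF assms(1)]
      wf_violation_seq[OF \<open>finite ?E\<close>] full_violation_seq[OF \<open>finite ?E\<close>] by blast+
  from erev_seq_rel[OF this(1) full_revchain_seq[OF assms(1)] this(2)]
  have "erev (seq_rel (revchain_seq \<Delta> i)) (seq_rel (violation_seq ?E)) =
      seq_rel (revchain_seq \<Delta> (Suc i))"
    by simp
  then show ?case
    using Suc gen_le_eq_seq_rel[OF \<open>finite ?E\<close> \<open>consistent ?E\<close>] by simp
qed

section \<open>Lexicographic comparison of violation profiles\<close>

definition lex_lt :: "(nat \<Rightarrow> nat) \<Rightarrow> (nat \<Rightarrow> nat) \<Rightarrow> bool" where
  "lex_lt a b \<longleftrightarrow> (\<exists>i. a i < b i \<and> (\<forall>j>i. a j = b j))"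

definition trunc_at :: "nat \<Rightarrow> (nat \<Rightarrow> nat) \<Rightarrow> nat \<Rightarrow> nat" where
  "trunc_at i f k = (if k < i then f k else 0)"

lemma lex_lt_trans: "lex_lt a b \<Longrightarrow> lex_lt b c \<Longrightarrow> lex_lt a c"
  unfolding lex_lt_def
proof (elim exE conjE)
  fix i k assume i: "a i < b i" "\<forall>j>i. a j = b j" and k: "b k < c k" "\<forall>j>k. b j = c j"
  show "\<exists>i. a i < c i \<and> (\<forall>j>i. a j = c j)"
  proof (cases i k rule: linorder_cases)
    case less then show ?thesis using i k by (intro exI[of _ k]) auto
  next
    case equal then show ?thesis using i k by (intro exI[of _ k]) auto
  next
    case greater then show ?thesis using i k by (intro exI[of _ i]) auto
  qed
qed

lemma eq_or_lex_lt_of_le: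
  assumes "\<forall>i. a i \<le> b i" "\<forall>i>n. a i = b i"
  shows "a = b \<or> lex_lt a b"
proof (cases "a = b")
  case False
  let ?S = "{i. a i \<noteq> b i}"
  have "?S \<subseteq> {..n}"
    using assms(2) not_le by auto
  then have "finite ?S" by (rule finite_subset) simp
  moreover have "?S \<noteq> {}" using False by auto
  ultimately have "Max ?S \<in> ?S" by (rule Max_in)
  moreover have "\<forall>j>Max ?S. a j = b j"
    using Max_ge[OF \<open>finite ?S\<close>] by (meson leD mem_Collect_eq)
  ultimately have "a (Max ?S) < b (Max ?S) \<and> (\<forall>j>Max ?S. a j = b j)"
    using assms(1) le_neq_implies_less by blast
  then have "lex_lt a b"
    unfolding lex_lt_def by blast
  then show ?thesis by simp
qed simp

lemma lex_lt_complement: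
  assumes "\<And>k. a k + a' k = c k" "\<And>k. b k + b' k = c k"
  shows "lex_lt a b \<longleftrightarrow> lex_lt b' a'"
proof -
  have "a k < b k \<longleftrightarrow> b' k < a' k" "a k = b k \<longleftrightarrow> b' k = a' k" for k
    using assms[of k] by linarith+
  then show ?thesis unfolding lex_lt_def by simp
qed

lemma not_lex_lt_trunc_at_0: "\<not> lex_lt (trunc_at 0 a) (trunc_at 0 b)"
  unfolding lex_lt_def trunc_at_def by simp

lemma lex_lt_trunc_at_Suc:
  "lex_lt (trunc_at (Suc i) a) (trunc_at (Suc i) b) \<longleftrightarrow>
    a i < b i \<or> (a i = b i \<and> lex_lt (trunc_at i a) (trunc_at i b))"
proof
  assume "lex_lt (trunc_at (Suc i) a) (trunc_at (Suc i) b)"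
  then obtain k where k: "trunc_at (Suc i) a k < trunc_at (Suc i) b k"
      "\<forall>j>k. trunc_at (Suc i) a j = trunc_at (Suc i) b j"
    unfolding lex_lt_def by blast
  then have "k < Suc i" unfolding trunc_at_def by (auto split: if_splits)
  show "a i < b i \<or> (a i = b i \<and> lex_lt (trunc_at i a) (trunc_at i b))"
  proof (cases "k = i")
    case True
    then show ?thesis using k(1) by (simp add: trunc_at_def)
  next
    case False
    with \<open>k < Suc i\<close> have "k < i" by simp
    then have "a i = b i" "trunc_at i a k < trunc_at i b k"
      "\<forall>j>k. trunc_at i a j = trunc_at i b j"
      using k by (auto simp: trunc_at_def split: if_splits)
    then show ?thesis unfolding lex_lt_def by blast
  qed
next
  assume "a i < b i \<or> (a i = b i \<and> lex_lt (trunc_at i a) (trunc_at i b))"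
  then show "lex_lt (trunc_at (Suc i) a) (trunc_at (Suc i) b)"
  proof
    assume "a i < b i"
    then show ?thesis unfolding lex_lt_def trunc_at_def by (intro exI[of _ i]) simp
  next
    assume "a i = b i \<and> lex_lt (trunc_at i a) (trunc_at i b)"
    then obtain k where "a i = b i" "trunc_at i a k < trunc_at i b k"
        "\<forall>j>k. trunc_at i a j = trunc_at i b j"
      unfolding lex_lt_def by blast
    then show ?thesis
      unfolding lex_lt_def trunc_at_def
      by (intro exI[of _ k]) (auto simp: less_Suc_eq split: if_splits)
  qed
qed

definition layer_violations :: "'v default set \<Rightarrow> 'v world \<Rightarrow> nat \<Rightarrow> nat" where
  "layer_violations \<Delta> w k = violations (mat (zlayer \<Delta> k)) w"

lemma level_revchain_seq_less_iff:
  assumes "finite \<Delta>"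
  shows "level (revchain_seq \<Delta> i) u < level (revchain_seq \<Delta> i) v \<longleftrightarrow>
    lex_lt (trunc_at i (layer_violations \<Delta> u)) (trunc_at i (layer_violations \<Delta> v))"
proof (induction i)
  case 0
  show ?case
    by (simp add: level_violation_seq violations_def not_lex_lt_trunc_at_0)
next
  case (Suc i)
  have "level (revchain_seq \<Delta> (Suc i)) w =
      layer_violations \<Delta> w i * length (revchain_seq \<Delta> i) + level (revchain_seq \<Delta> i) w" for w
    using assms by (simp add: level_seq_rev wf_revchain_seq full_revchain_seq wf_violation_seq full_violation_seq
        finite_mat_zlayer level_violation_seq layer_violations_def)
  then show ?case
    using level_less_length[OF wf_revchain_seq[OF assms] full_revchain_seq[OF assms]]
    by (simp add: mixed_radix_less_iff Suc.IH lex_lt_trunc_at_Suc)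
qed

section \<open>Lexicographic closure\<close>

definition layer_count :: "'v default set \<Rightarrow> 'v default set \<Rightarrow> nat \<Rightarrow> nat" where
  "layer_count \<Delta> A i = card (A \<inter> zlayer \<Delta> i)"

definition satisfied_defaults :: "'v default set \<Rightarrow> 'v world \<Rightarrow> 'v default set" where
  "satisfied_defaults \<Delta> w = {d\<in>\<Delta>. sat w (Imp (fst d) (snd d))}"

lemma lex_less_iff_lex_lt: "lex_less \<Delta> A B \<longleftrightarrow> lex_lt (layer_count \<Delta> A) (layer_count \<Delta> B)"
  unfolding lex_less_def lex_lt_def layer_count_def by simp

lemma eq_or_lex_less_of_subset:
  assumes "finite \<Delta>" "has_zpartition \<Delta> n" "A \<subseteq> B" "B \<subseteq> \<Delta>"
  shows "layer_count \<Delta> A = layer_count \<Delta> B \<or> lex_less \<Delta> A B"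
  unfolding lex_less_iff_lex_lt
proof (rule eq_or_lex_lt_of_le)
  show "\<forall>i. layer_count \<Delta> A i \<le> layer_count \<Delta> B i"
    unfolding layer_count_def using assms finite_subset by (intro allI card_mono) blast+
  show "\<forall>i>n. layer_count \<Delta> A i = layer_count \<Delta> B i"
    unfolding layer_count_def using zlayer_empty_beyond[OF assms(2)] by simp
qed

lemma lex_less_subset_right:
  assumes "finite \<Delta>" "has_zpartition \<Delta> n" "lex_less \<Delta> A B" "B \<subseteq> B'" "B' \<subseteq> \<Delta>"
  shows "lex_less \<Delta> A B'"
  using eq_or_lex_less_of_subset[OF assms(1,2,4,5)] assms(3) lex_lt_trans
  unfolding lex_less_iff_lex_lt by metis

lemma lex_less_subset_left:
  assumes "finite \<Delta>" "has_zpartition \<Delta> n" "lex_less \<Delta> A' B" "A \<subseteq> A'" "A' \<subseteq> \<Delta>"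
  shows "lex_less \<Delta> A B"
  using eq_or_lex_less_of_subset[OF assms(1,2,4,5)] assms(3) lex_lt_trans
  unfolding lex_less_iff_lex_lt by metis

lemma sat_mat_iff: "(\<forall>f\<in>mat \<Gamma>. sat w f) \<longleftrightarrow> (\<forall>d\<in>\<Gamma>. sat w (Imp (fst d) (snd d)))"
  unfolding mat_eq_image by auto

lemma consistent_satisfied_defaults:
  "sat w \<theta> \<Longrightarrow> consistent (mat (satisfied_defaults \<Delta> w) \<union> {\<theta>})"
  unfolding consistent_iff by (auto simp: sat_mat_iff satisfied_defaults_def)

lemma satisfied_defaults_subset: "satisfied_defaults \<Delta> w \<subseteq> \<Delta>"
  unfolding satisfied_defaults_def by blast

lemma subset_satisfied_defaults:
  "\<Gamma> \<subseteq> \<Delta> \<Longrightarrow> \<forall>f\<in>mat \<Gamma>. sat w f \<Longrightarrow> \<Gamma> \<subseteq> satisfied_defaults \<Delta> w"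
  unfolding sat_mat_iff satisfied_defaults_def by blast

lemma lex_entails_iff_preferred_worlds:
  assumes "finite \<Delta>" "has_zpartition \<Delta> n"
  shows "lex_entails \<Delta> \<theta> \<phi> \<longleftrightarrow>
    (\<forall>w. sat w \<theta> \<and>
         (\<forall>u. sat u \<theta> \<longrightarrow> \<not> lex_less \<Delta> (satisfied_defaults \<Delta> w) (satisfied_defaults \<Delta> u))
       \<longrightarrow> sat w \<phi>)"
proof
  assume lex: "lex_entails \<Delta> \<theta> \<phi>"
  show "\<forall>w. sat w \<theta> \<and>
    (\<forall>u. sat u \<theta> \<longrightarrow> \<not> lex_less \<Delta> (satisfied_defaults \<Delta> w) (satisfied_defaults \<Delta> u))
    \<longrightarrow> sat w \<phi>"
  proof (intro allI impI)
    fix w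
    assume w: "sat w \<theta> \<and>
      (\<forall>u. sat u \<theta> \<longrightarrow> \<not> lex_less \<Delta> (satisfied_defaults \<Delta> w) (satisfied_defaults \<Delta> u))"
    let ?G = "satisfied_defaults \<Delta> w"
    have "\<forall>\<Gamma>'. \<Gamma>' \<subseteq> \<Delta> \<and> consistent (mat \<Gamma>' \<union> {\<theta>}) \<longrightarrow> \<not> lex_less \<Delta> ?G \<Gamma>'"
    proof (intro allI impI notI)
      fix \<Gamma>' assume \<Gamma>': "\<Gamma>' \<subseteq> \<Delta> \<and> consistent (mat \<Gamma>' \<union> {\<theta>})" "lex_less \<Delta> ?G \<Gamma>'"
      obtain u where u: "\<forall>f\<in>mat \<Gamma>'. sat u f" "sat u \<theta>"
        using \<Gamma>'(1) unfolding consistent_iff by auto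
      have "\<Gamma>' \<subseteq> satisfied_defaults \<Delta> u"
        using \<Gamma>'(1) u(1) by (simp add: subset_satisfied_defaults)
      with \<Gamma>'(2) have "lex_less \<Delta> ?G (satisfied_defaults \<Delta> u)"
        by (rule lex_less_subset_right[OF assms _ _ satisfied_defaults_subset])
      then show False using w u(2) by blast
    qed
    then have "entails (mat ?G \<union> {\<theta>}) \<phi>"
      using lex[unfolded lex_entails_def, rule_format, of ?G] satisfied_defaults_subset[of \<Delta> w]
        consistent_satisfied_defaults[of w \<theta> \<Delta>] w by blast
    moreover have "\<forall>f\<in>mat ?G \<union> {\<theta>}. sat w f"
      using w by (simp add: sat_mat_iff satisfied_defaults_def)
    ultimately show "sat w \<phi>" unfolding entails_iff by blast
  qed
next
  assume pref: "\<forall>w. sat w \<theta> \<and>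
    (\<forall>u. sat u \<theta> \<longrightarrow> \<not> lex_less \<Delta> (satisfied_defaults \<Delta> w) (satisfied_defaults \<Delta> u))
    \<longrightarrow> sat w \<phi>"
  show "lex_entails \<Delta> \<theta> \<phi>"
    unfolding lex_entails_def entails_iff
  proof (intro allI impI)
    fix \<Gamma> w
    assume "\<Gamma> \<subseteq> \<Delta> \<and> consistent (mat \<Gamma> \<union> {\<theta>}) \<and>
      (\<forall>\<Gamma>'. \<Gamma>' \<subseteq> \<Delta> \<and> consistent (mat \<Gamma>' \<union> {\<theta>}) \<longrightarrow> \<not> lex_less \<Delta> \<Gamma> \<Gamma>')"
    then have \<Gamma>: "\<Gamma> \<subseteq> \<Delta>"
      and \<Gamma>_max: "\<And>\<Gamma>'. \<Gamma>' \<subseteq> \<Delta> \<Longrightarrow> consistent (mat \<Gamma>' \<union> {\<theta>}) \<Longrightarrow> \<not> lex_less \<Delta> \<Gamma> \<Gamma>'"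
      by simp_all
    assume w: "\<forall>f\<in>mat \<Gamma> \<union> {\<theta>}. sat w f"
    have "\<Gamma> \<subseteq> satisfied_defaults \<Delta> w"
      using \<Gamma> w by (simp add: subset_satisfied_defaults)
    have "\<not> lex_less \<Delta> (satisfied_defaults \<Delta> w) (satisfied_defaults \<Delta> u)" if "sat u \<theta>" for u
    proof
      assume "lex_less \<Delta> (satisfied_defaults \<Delta> w) (satisfied_defaults \<Delta> u)"
      then have "lex_less \<Delta> \<Gamma> (satisfied_defaults \<Delta> u)"
        using \<open>\<Gamma> \<subseteq> satisfied_defaults \<Delta> w\<close>
        by (rule lex_less_subset_left[OF assms _ _ satisfied_defaults_subset])
      then show False
        using \<Gamma>_max[OF satisfied_defaults_subset consistent_satisfied_defaults[OF that]] by blast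
    qed
    then show "sat w \<phi>" using pref w by simp
  qed
qed

lemma violations_mat:
  "violations (mat D) w = card {d\<in>D. \<not> sat w (Imp (fst d) (snd d))}"
proof -
  have "{f\<in>mat D. \<not> sat w f} = (\<lambda>d. Imp (fst d) (snd d)) ` {d\<in>D. \<not> sat w (Imp (fst d) (snd d))}"
    unfolding mat_eq_image by auto
  moreover have "inj_on (\<lambda>d. Imp (fst d) (snd d)) X" for X :: "'a default set"
    by (auto simp: inj_on_def prod_eq_iff)
  ultimately show ?thesis unfolding violations_def by (simp add: card_image)
qed

lemma layer_count_add_layer_violations:
  assumes "finite \<Delta>"
  shows "layer_count \<Delta> (satisfied_defaults \<Delta> w) k + layer_violations \<Delta> w k = card (zlayer \<Delta> k)"
proof -
  let ?L = "zlayer \<Delta> k" and ?s = "\<lambda>d. sat w (Imp (fst d) (snd d))"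
  have "finite ?L" using assms zlayer_subset finite_subset by blast
  have "satisfied_defaults \<Delta> w \<inter> ?L = {d\<in>?L. ?s d}"
    unfolding satisfied_defaults_def using zlayer_subset by blast
  then show ?thesis
    unfolding layer_count_def layer_violations_def violations_mat
    by (simp only: card_filter_add_card_filter_not[OF \<open>finite ?L\<close>])
qed

lemma lex_less_satisfied_defaults_iff_level:
  assumes "finite \<Delta>" "has_zpartition \<Delta> n"
  shows "lex_less \<Delta> (satisfied_defaults \<Delta> v) (satisfied_defaults \<Delta> u) \<longleftrightarrow>
    level (revchain_seq \<Delta> (Suc n)) u < level (revchain_seq \<Delta> (Suc n)) v"
proof -
  have trunc: "trunc_at (Suc n) (layer_violations \<Delta> w) = layer_violations \<Delta> w" for w
    using zlayer_empty_beyond[OF assms(2)]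
    by (auto simp: fun_eq_iff trunc_at_def layer_violations_def violations_def mat_def)
  show ?thesis
    unfolding lex_less_iff_lex_lt level_revchain_seq_less_iff[OF assms(1)] trunc
    by (rule lex_lt_complement) (rule layer_count_add_layer_violations[OF assms(1)])+
qed

lemma ex_strict_lower_bound_iff_minima:
  fixes f :: "'a \<Rightarrow> nat"
  shows "(\<exists>w. \<forall>u. \<not> P u \<longrightarrow> f w < f u) \<longleftrightarrow> (\<forall>w. (\<forall>u. f w \<le> f u) \<longrightarrow> P w)"
proof
  assume "\<exists>w. \<forall>u. \<not> P u \<longrightarrow> f w < f u"
  then show "\<forall>w. (\<forall>u. f w \<le> f u) \<longrightarrow> P w" by (meson leD)
next
  assume minima: "\<forall>w. (\<forall>u. f w \<le> f u) \<longrightarrow> P w"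
  obtain w where "\<forall>u. f w \<le> f u" using ex_has_least_nat[of "\<lambda>_. True" undefined f] by blast
  then show "\<exists>w. \<forall>u. \<not> P u \<longrightarrow> f w < f u"
    using minima by (meson le_trans not_le)
qed

lemma Bel_seq_rel_full:
  assumes "wf_seq F" "full F"
  shows "Bel (seq_rel F) = {\<phi>. \<forall>w. (\<forall>x. level F w \<le> level F x) \<longrightarrow> sat w \<phi>}"
proof -
  have strict: "strict (seq_rel F) Bot \<phi> \<longleftrightarrow> (\<exists>w. \<forall>u. \<not> sat u \<phi> \<longrightarrow> level F w < level F u)"
    for \<phi>
    unfolding strict_def seq_rel_full_iff[OF assms] by (auto simp: not_le)
  then have believes: "\<exists>\<phi>. strict (seq_rel F) Bot \<phi>" by (intro exI[of _ Top]) simp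
  show ?thesis
    unfolding Bel_def if_P[OF believes] strict ex_strict_lower_bound_iff_minima ..
qed

lemma Bel_total: "(\<And>a b. R a b) \<Longrightarrow> Bel R = UNIV"
  unfolding Bel_def strict_def by simp

lemma minimal_level_seq_rev_singleton_iff:
  assumes "wf_seq C" "full C" "sat t \<theta>"
  shows "(\<forall>x. level (seq_rev C (violation_seq {\<theta>})) w \<le> level (seq_rev C (violation_seq {\<theta>})) x)
    \<longleftrightarrow> sat w \<theta> \<and> (\<forall>u. sat u \<theta> \<longrightarrow> level C w \<le> level C u)"
proof -
  let ?l = "level (seq_rev C (violation_seq {\<theta>}))"
  have "violations {\<theta>} x = (if sat x \<theta> then 0 else 1)" for x
    unfolding violations_def by (simp add: Collect_conv_if)
  then have level: "?l x = (if sat x \<theta> then 0 else length C) + level C x" for x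
    by (simp add: level_seq_rev assms(1,2) wf_violation_seq full_violation_seq level_violation_seq)
  have less_length: "level C x < length C" for x
    by (rule level_less_length[OF assms(1,2)])
  show ?thesis
  proof
    assume min: "\<forall>x. ?l w \<le> ?l x"
    have "sat w \<theta>"
    proof (rule ccontr)
      assume "\<not> sat w \<theta>"
      then have "?l t < ?l w"
        using less_length[of t] assms(3) unfolding level by simp
      with min show False by (meson not_le)
    qed
    moreover have "level C w \<le> level C u" if "sat u \<theta>" for u
      using min[rule_format, of u] \<open>sat w \<theta>\<close> that unfolding level by simp
    ultimately show "sat w \<theta> \<and> (\<forall>u. sat u \<theta> \<longrightarrow> level C w \<le> level C u)" by blast
  next
    assume best: "sat w \<theta> \<and> (\<forall>u. sat u \<theta> \<longrightarrow> level C w \<le> level C u)"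
    show "\<forall>x. ?l w \<le> ?l x"
    proof
      fix x
      show "?l w \<le> ?l x"
        using best less_length[of w] unfolding level by (cases "sat x \<theta>") auto
    qed
  qed
qed

lemma Bel_erev_gen_le_inconsistent:
  fixes C :: "('v::finite) seq"
  assumes "wf_seq C" "full C" "\<not> consistent E"
  shows "Bel (erev (seq_rel C) (gen_le E)) = UNIV"
proof -
  have "gen_le E = seq_rel [{}]"
    by (intro ext) (simp add: gen_le_inconsistent[OF assms(3)] seq_rel_trivial)
  moreover have "C \<in> Upsilon" "[{}] \<in> Upsilon"
    using assms(1,2) by (simp_all add: Upsilon_def wf_seq_def empty_seq_def)
  ultimately have "erev (seq_rel C) (gen_le E) = seq_rel (seq_rev C [{}])"
    using erev_seq_rel[OF _ assms(2)] by simp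
  moreover have "\<forall>X\<in>set (seq_rev C [{}]). X = {}"
    by (rule seq_rev_trivial) simp
  ultimately show ?thesis
    using Bel_total seq_rel_trivial by metis
qed

lemma Bel_erev_gen_le_singleton:
  fixes C :: "('v::finite) seq"
  assumes "wf_seq C" "full C" "sat t \<theta>"
  shows "Bel (erev (seq_rel C) (gen_le {\<theta>})) =
    {\<phi>. \<forall>w. sat w \<theta> \<and> (\<forall>u. sat u \<theta> \<longrightarrow> level C w \<le> level C u) \<longrightarrow> sat w \<phi>}"
proof -
  let ?V = "violation_seq {\<theta>}"
  have V: "wf_seq ?V" "full ?V"
    by (simp_all add: wf_violation_seq full_violation_seq)
  have "consistent {\<theta>}"
    using assms(3) unfolding consistent_iff by blast
  then have "gen_le {\<theta>} = seq_rel ?V"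
    by (simp add: gen_le_eq_seq_rel)
  moreover have "C \<in> Upsilon" "?V \<in> Upsilon"
    using assms(1,2) V by (simp_all add: Upsilon_def)
  ultimately have revision: "erev (seq_rel C) (gen_le {\<theta>}) = seq_rel (seq_rev C ?V)"
    using erev_seq_rel[OF _ assms(2)] by simp
  show ?thesis
    unfolding revision Bel_seq_rel_full[OF wf_seq_rev[OF assms(1,2) V] full_seq_rev[OF assms(1,2) V]]
      minimal_level_seq_rev_singleton_iff[OF assms] by simp
qed

theorem corollary1:
  fixes \<Delta> :: "('v::finite) default set" and n :: nat
  assumes "finite \<Delta>"
    and "consistent (mat \<Delta>)"
    and "has_zpartition \<Delta> n"
  shows "\<forall>\<theta> \<phi>. lex_entails \<Delta> \<theta> \<phi> \<longleftrightarrow>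
           \<phi> \<in> Bel (erev (revchain \<Delta> (Suc n)) (gen_le {\<theta>}))"
proof (intro allI)
  fix \<theta> \<phi> :: "'v form"
  let ?C = "revchain_seq \<Delta> (Suc n)"
  have C: "wf_seq ?C" "full ?C"
    using wf_revchain_seq[OF assms(1)] full_revchain_seq[OF assms(1)] by blast+
  have chain: "revchain \<Delta> (Suc n) = seq_rel ?C"
    by (rule revchain_eq_seq_rel[OF assms(1,2)])
  show "lex_entails \<Delta> \<theta> \<phi> \<longleftrightarrow> \<phi> \<in> Bel (erev (revchain \<Delta> (Suc n)) (gen_le {\<theta>}))"
  proof (cases "consistent {\<theta>}")
    case False
    then have "lex_entails \<Delta> \<theta> \<phi>"
      unfolding lex_entails_def consistent_iff by simp
    then show ?thesis
      unfolding chain Bel_erev_gen_le_inconsistent[OF C False] by simp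
  next
    case True
    then obtain t where "sat t \<theta>"
      unfolding consistent_iff by auto
    show ?thesis
      unfolding chain Bel_erev_gen_le_singleton[OF C \<open>sat t \<theta>\<close>]
        lex_entails_iff_preferred_worlds[OF assms(1,3)]
        lex_less_satisfied_defaults_iff_level[OF assms(1,3)] not_less
      by simp
  qed
qed

end
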